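(* Let $Z_0=(X_0,Y_0)$ be a Filippov system for which $p\in\Sigma$ is an invisible cusp-fold singularity of degree $1$, i.e. $p$ is a cusp of $X_0$ and an invisible fold of $Y_0$, $S_{X_0}$ and $S_{Y_0}$ intersect transversally at $p$, and $Y_0X_0f(p)\neq0$. Then there exist a neighborhood $\mathcal{U}$ of $Z_0$ in $\Omega^\infty$ and a neighborhood $U\subset\mathbb{R}^3$ of $p$ such that no $Z\in\mathcal{U}$ has a crossing limit cycle contained in $U$.
   Context: Let $M\subset\mathbb{R}^3$ be open, $f:M\to\mathbb{R}$ smooth with $0$ a regular value, $\Sigma=f^{-1}(0)$, $M^{\pm}=\{\pm f>0\}$. $\Omega^\infty$ is the space of Filippov (piecewise smooth) systems $Z=(X,Y)$ with switching manifold $\Sigma$, where $X,Y$ are $\mathcal{C}^\infty$ vector fields, $X$ acting on $M^+$ and $Y$ on $M^-$, with the usual $\mathcal{C}^\infty$ topology on pairs; trajectories follow Filippov's convention. Lie derivatives: $Xf(p)=\langle X(p),\nabla f(p)\rangle$, $X^kf=X(X^{k-1}f)$, $YXf=Y(Xf)$; $S_X=\{p\in\Sigma:Xf(p)=0\}$. The crossing region is $\Sigma^c=\{p\in\Sigma: Xf(p)Yf(p)>0\}$. A point $p\in\Sigma$ is a fold of $X$ if $Xf(p)=0\neq X^2f(p)$; a cusp of $X$ if $Xf(p)=X^2f(p)=0$, $X^3f(p)\neq0$ and $\det(\nabla f(p),\nabla Xf(p),\nabla X^2f(p))\neq0$. A fold $p$ of $Y$ (acting on $M^-$) is invisible if $Y^2f(p)>0$.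 A crossing limit cycle (CLC) of $Z$ is an isolated closed orbit of $Z$ formed by concatenating regular orbit arcs of $X$ in $M^+$ and of $Y$ in $M^-$, meeting $\Sigma$ only at points of $\Sigma^c$. *)

theory Defs
  imports "HOL-Analysis.Analysis"
begin

type_synonym pt = "real^3"

fun pdl :: "3 list \<Rightarrow> (pt \<Rightarrow> 'b::real_normed_vector) \<Rightarrow> pt \<Rightarrow> 'b" where
  "pdl [] g = g"
| "pdl (i # is) g = (\<lambda>x. frechet_derivative (pdl is g) (at x) (axis i 1))"

definition smooth_on :: "pt set \<Rightarrow> (pt \<Rightarrow> 'b::real_normed_vector) \<Rightarrow> bool" where
  "smooth_on M g \<longleftrightarrow> (\<forall>ds. \<forall>x\<in>M. pdl ds g differentiable (at x))"

definition grad :: "(pt \<Rightarrow> real) \<Rightarrow> pt \<Rightarrow> pt" where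
  "grad g x = (\<chi> i. frechet_derivative g (at x) (axis i 1))"

definition lie :: "(pt \<Rightarrow> pt) \<Rightarrow> (pt \<Rightarrow> real) \<Rightarrow> pt \<Rightarrow> real" where
  "lie X g = (\<lambda>x. X x \<bullet> grad g x)"

definition Sigma_set :: "pt set \<Rightarrow> (pt \<Rightarrow> real) \<Rightarrow> pt set" where
  "Sigma_set M f = {x \<in> M. f x = 0}"

definition Mplus :: "pt set \<Rightarrow> (pt \<Rightarrow> real) \<Rightarrow> pt set" where
  "Mplus M f = {x \<in> M. f x > 0}"

definition Mminus :: "pt set \<Rightarrow> (pt \<Rightarrow> real) \<Rightarrow> pt set" where
  "Mminus M f = {x \<in> M. f x < 0}"

definition crossing_region :: "pt set \<Rightarrow> (pt \<Rightarrow> real) \<Rightarrow> (pt \<Rightarrow> pt) \<Rightarrow> (pt \<Rightarrow> pt) \<Rightarrow> pt set" where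
  "crossing_region M f X Y = {x \<in> Sigma_set M f. lie X f x * lie Y f x > 0}"

definition is_cusp :: "pt set \<Rightarrow> (pt \<Rightarrow> real) \<Rightarrow> (pt \<Rightarrow> pt) \<Rightarrow> pt \<Rightarrow> bool" where
  "is_cusp M f X p \<longleftrightarrow> p \<in> Sigma_set M f \<and> lie X f p = 0 \<and> lie X (lie X f) p = 0
     \<and> lie X (lie X (lie X f)) p \<noteq> 0
     \<and> det (vector [grad f p, grad (lie X f) p, grad (lie X (lie X f)) p] :: real^3^3) \<noteq> 0"

definition is_fold :: "pt set \<Rightarrow> (pt \<Rightarrow> real) \<Rightarrow> (pt \<Rightarrow> pt) \<Rightarrow> pt \<Rightarrow> bool" where
  "is_fold M f X p \<longleftrightarrow> p \<in> Sigma_set M f \<and> lie X f p = 0 \<and> lie X (lie X f) p \<noteq> 0"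

text \<open>Invisible fold of Y (Y acting on M^-).\<close>
definition is_invisible_fold_minus :: "pt set \<Rightarrow> (pt \<Rightarrow> real) \<Rightarrow> (pt \<Rightarrow> pt) \<Rightarrow> pt \<Rightarrow> bool" where
  "is_invisible_fold_minus M f Y p \<longleftrightarrow> is_fold M f Y p \<and> lie Y (lie Y f) p > 0"

text \<open>Tangent line at p of the curve S_X = {x in Sigma. Xf x = 0} (regular level set).\<close>
definition tangent_SX :: "(pt \<Rightarrow> real) \<Rightarrow> (pt \<Rightarrow> pt) \<Rightarrow> pt \<Rightarrow> pt set" where
  "tangent_SX f X p = {v. grad f p \<bullet> v = 0 \<and> grad (lie X f) p \<bullet> v = 0}"

definition transversal_at :: "(pt \<Rightarrow> real) \<Rightarrow> (pt \<Rightarrow> pt) \<Rightarrow> (pt \<Rightarrow> pt) \<Rightarrow> pt \<Rightarrow> bool" where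
  "transversal_at f X Y p \<longleftrightarrow>
     {a + b | a b. a \<in> tangent_SX f X p \<and> b \<in> tangent_SX f Y p} = {v. grad f p \<bullet> v = 0}"

definition closed_crossing_orbit ::
  "pt set \<Rightarrow> (pt \<Rightarrow> real) \<Rightarrow> (pt \<Rightarrow> pt) \<Rightarrow> (pt \<Rightarrow> pt) \<Rightarrow> (real \<Rightarrow> pt) \<Rightarrow> real \<Rightarrow> bool" where
  "closed_crossing_orbit M f X Y \<gamma> T \<longleftrightarrow>
     T > 0 \<and> continuous_on UNIV \<gamma> \<and> (\<forall>t. \<gamma> (t + T) = \<gamma> t) \<and> (\<forall>t. \<gamma> t \<in> M)
     \<and> (\<forall>t. \<gamma> t \<in> Mplus M f \<longrightarrow> (\<gamma> has_vector_derivative X (\<gamma> t)) (at t))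
     \<and> (\<forall>t. \<gamma> t \<in> Mminus M f \<longrightarrow> (\<gamma> has_vector_derivative Y (\<gamma> t)) (at t))
     \<and> (\<forall>t. \<gamma> t \<in> Sigma_set M f \<longrightarrow> \<gamma> t \<in> crossing_region M f X Y)
     \<and> finite {t \<in> {0..T}. \<gamma> t \<in> Sigma_set M f}
     \<and> (\<exists>t. \<gamma> t \<in> Sigma_set M f)"

definition crossing_limit_cycle ::
  "pt set \<Rightarrow> (pt \<Rightarrow> real) \<Rightarrow> (pt \<Rightarrow> pt) \<Rightarrow> (pt \<Rightarrow> pt) \<Rightarrow> (real \<Rightarrow> pt) \<Rightarrow> real \<Rightarrow> bool" where
  "crossing_limit_cycle M f X Y \<gamma> T \<longleftrightarrow>
     closed_crossing_orbit M f X Y \<gamma> T \<and>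
     (\<exists>e>0. \<forall>\<delta> S. closed_crossing_orbit M f X Y \<delta> S
        \<and> range \<delta> \<subseteq> (\<Union>x\<in>range \<gamma>. ball x e) \<longrightarrow> range \<delta> = range \<gamma>)"

text \<open>Basic neighbourhoods of the weak (compact-open) C-infinity topology.\<close>
definition Ck_close :: "pt set \<Rightarrow> nat \<Rightarrow> real \<Rightarrow> (pt \<Rightarrow> pt) \<Rightarrow> (pt \<Rightarrow> pt) \<Rightarrow> bool" where
  "Ck_close K n e X X0 \<longleftrightarrow>
     (\<forall>ds. length ds \<le> n \<longrightarrow> (\<forall>x\<in>K. norm (pdl ds X x - pdl ds X0 x) < e))"

end

theory Submission
  imports Defs
begin

text \<open>Since \<open>X\<^sub>0\<^sup>2f(p) = 0 \<noteq> Y\<^sub>0X\<^sub>0f(p)\<close>, the vectors \<open>X\<^sub>0(p)\<close> and \<open>Y\<^sub>0(p)\<close> are not parallel, so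
  some linear functional \<open>w\<close> is positive on both. By continuity it stays positive on both
  fields of every \<open>C\<^sup>0\<close>-close system near \<open>p\<close>, so \<open>w\<close> strictly increases along every crossing
  orbit there (off its finitely many switching times) and no such orbit closes up.\<close>

lemma DERIV_pos_imp_increasing_open_finite:
  fixes f :: "real \<Rightarrow> real" and S :: "real set"
  assumes "finite S" and "a < b"
    and "\<And>x. a < x \<Longrightarrow> x < b \<Longrightarrow> x \<notin> S \<Longrightarrow> \<exists>y. DERIV f x :> y \<and> y > 0"
    and "continuous_on {a..b} f"
  shows "f a < f b"
  using assms
proof (induction S arbitrary: a b rule: finite_induct)
  case empty
  then show ?case by (rule DERIV_pos_imp_increasing_open) auto
next
  case (insert s S)
  note deriv = insert.prems(2) and cont = insert.prems(3)
  show ?case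
  proof (cases "a < s \<and> s < b")
    case True
    have "f a < f s"
    proof (rule insert.IH)
      show "continuous_on {a..s} f"
        using True by (intro continuous_on_subset[OF cont]) auto
    qed (use True deriv in auto)
    also have "f s < f b"
    proof (rule insert.IH)
      show "continuous_on {s..b} f"
        using True by (intro continuous_on_subset[OF cont]) auto
    qed (use True deriv in auto)
    finally show ?thesis .
  next
    case False
    show ?thesis
      by (rule insert.IH) (use False insert.prems in auto)
  qed
qed

lemma exists_inner_pos_pair:
  fixes a b :: "'a::real_inner"
  assumes "a \<noteq> 0" and "b \<noteq> 0" and not_opposite: "\<And>c. c < 0 \<Longrightarrow> b \<noteq> c *\<^sub>R a"
  shows "\<exists>w. w \<bullet> a > 0 \<and> w \<bullet> b > 0"
proof -
  define u where "u = a /\<^sub>R norm a"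
  define v where "v = b /\<^sub>R norm b"
  have a_eq: "a = norm a *\<^sub>R u" and b_eq: "b = norm b *\<^sub>R v"
    using assms(1,2) by (simp_all add: u_def v_def)
  have unit: "u \<bullet> u = 1" "v \<bullet> v = 1"
    using assms(1,2) by (simp_all add: u_def v_def dot_square_norm)
  have "1 + u \<bullet> v > 0"
  proof (rule ccontr)
    assume "\<not> 1 + u \<bullet> v > 0"
    then have "(u + v) \<bullet> (u + v) \<le> 0"
      using unit by (simp add: inner_add_left inner_add_right inner_commute)
    then have "v = - u"
      by (metis add_eq_0_iff inner_eq_zero_iff inner_ge_zero order_antisym)
    then have "b = (- norm b / norm a) *\<^sub>R a"
      using b_eq assms(1) by (simp add: u_def divide_inverse)
    then show False
      using not_opposite[of "- norm b / norm a"] assms(1,2) by simp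
  qed
  moreover have "(u + v) \<bullet> a = norm a * (1 + u \<bullet> v)" "(u + v) \<bullet> b = norm b * (1 + u \<bullet> v)"
    by (subst a_eq b_eq, simp add: unit inner_add_left inner_commute algebra_simps)+
  ultimately show ?thesis
    using assms(1,2) by (intro exI[of _ "u + v"]) simp
qed

lemma ne_scaleR_if_lie_zero_ne_zero:
  assumes "lie X g x = 0" and "lie Y g x \<noteq> 0"
  shows "Y x \<noteq> c *\<^sub>R X x"
  using assms by (auto simp: lie_def)

lemma lie_nonzero_imp_nonzero:
  assumes "lie X g x \<noteq> 0"
  shows "X x \<noteq> 0"
  using assms by (auto simp: lie_def)

lemma inner_pos_near:
  fixes Z0 :: "'a::metric_space \<Rightarrow> 'b::real_inner"
  assumes "isCont Z0 p" and "w \<bullet> Z0 p > 0"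
  obtains r e where "r > 0" "e > 0"
    "\<And>x z. dist x p < r \<Longrightarrow> dist z (Z0 x) < e \<Longrightarrow> w \<bullet> z > 0"
proof -
  define c where "c = w \<bullet> Z0 p / 2"
  have "c > 0" using assms(2) by (simp add: c_def)
  have "isCont (\<lambda>x. w \<bullet> Z0 x) p"
    using assms(1) by (intro continuous_intros)
  then obtain r where "r > 0" and r: "\<And>x. dist x p < r \<Longrightarrow> \<bar>w \<bullet> Z0 x - w \<bullet> Z0 p\<bar> < c"
    using \<open>c > 0\<close> unfolding continuous_at_eps_delta dist_real_def by blast
  define e where "e = c / (norm w + 1)"
  have "e > 0" using \<open>c > 0\<close> by (simp add: e_def add_nonneg_pos)
  have "norm w * e < c"
    using \<open>c > 0\<close> by (simp add: e_def field_simps add_pos_nonneg)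
  have "w \<bullet> z > 0" if "dist x p < r" "dist z (Z0 x) < e" for x z
  proof -
    have "\<bar>w \<bullet> (z - Z0 x)\<bar> \<le> norm w * norm (z - Z0 x)"
      by (rule Cauchy_Schwarz_ineq2)
    also have "\<dots> \<le> norm w * e"
      using that(2) by (simp add: dist_norm mult_left_mono)
    finally have "\<bar>w \<bullet> z - w \<bullet> Z0 x\<bar> < c"
      using \<open>norm w * e < c\<close> by (simp add: inner_diff_right)
    then show ?thesis
      using r[OF that(1)] unfolding abs_less_iff c_def by linarith
  qed
  then show thesis
    using that \<open>r > 0\<close> \<open>e > 0\<close> by blast
qed

lemma inner_pos_persists:
  assumes "open M" and "p \<in> M" and "isCont X0 p" and "isCont Y0 p"
    and "w \<bullet> X0 p > 0" and "w \<bullet> Y0 p > 0"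
  obtains r e where "r > 0" "e > 0" "cball p r \<subseteq> M"
    "\<And>x z z'. x \<in> cball p r \<Longrightarrow> dist z (X0 x) < e \<Longrightarrow> dist z' (Y0 x) < e
      \<Longrightarrow> w \<bullet> z > 0 \<and> w \<bullet> z' > 0"
proof -
  obtain rX eX where "rX > 0" "eX > 0"
    and posX: "\<And>x z. dist x p < rX \<Longrightarrow> dist z (X0 x) < eX \<Longrightarrow> w \<bullet> z > 0"
    using inner_pos_near[OF assms(3,5)] by blast
  obtain rY eY where "rY > 0" "eY > 0"
    and posY: "\<And>x z. dist x p < rY \<Longrightarrow> dist z (Y0 x) < eY \<Longrightarrow> w \<bullet> z > 0"
    using inner_pos_near[OF assms(4,6)] by blast
  obtain rM where "rM > 0" "ball p rM \<subseteq> M"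
    using assms(1,2) open_contains_ball by blast
  define r where "r = min rM (min rX rY) / 2"
  have "r > 0" "r < rX" "r < rY" "cball p r \<subseteq> M"
    using \<open>rM > 0\<close> \<open>rX > 0\<close> \<open>rY > 0\<close> \<open>ball p rM \<subseteq> M\<close> by (auto simp: r_def)
  moreover have "min eX eY > 0"
    using \<open>eX > 0\<close> \<open>eY > 0\<close> by simp
  moreover have "w \<bullet> z > 0 \<and> w \<bullet> z' > 0"
    if "x \<in> cball p r" "dist z (X0 x) < min eX eY" "dist z' (Y0 x) < min eX eY" for x z z'
    using that posX[of x z] posY[of x z'] \<open>r < rX\<close> \<open>r < rY\<close> by (auto simp: dist_commute)
  ultimately show thesis
    using that by blast
qed

lemma smooth_on_imp_isCont:
  assumes "smooth_on M g" and "x \<in> M"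
  shows "isCont g x"
  using assms differentiable_imp_continuous_within
  unfolding smooth_on_def by (metis pdl.simps(1))

lemma Ck_close_imp_dist:
  assumes "Ck_close K n e X X0" and "x \<in> K"
  shows "dist (X x) (X0 x) < e"
  using assms unfolding Ck_close_def dist_norm by (auto dest: spec[of _ "[]"])

lemma no_closed_crossing_orbit_if_inner_pos:
  assumes pos: "\<And>x. x \<in> U \<Longrightarrow> w \<bullet> X x > 0 \<and> w \<bullet> Y x > 0" and "range \<gamma> \<subseteq> U"
  shows "\<not> closed_crossing_orbit M f X Y \<gamma> T"
proof
  assume "closed_crossing_orbit M f X Y \<gamma> T"
  then have "T > 0" and cont: "continuous_on UNIV \<gamma>" and per: "\<forall>t. \<gamma> (t + T) = \<gamma> t"
    and inM: "\<And>t. \<gamma> t \<in> M"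
    and dX: "\<And>t. \<gamma> t \<in> Mplus M f \<Longrightarrow> (\<gamma> has_vector_derivative X (\<gamma> t)) (at t)"
    and dY: "\<And>t. \<gamma> t \<in> Mminus M f \<Longrightarrow> (\<gamma> has_vector_derivative Y (\<gamma> t)) (at t)"
    and fin: "finite {t \<in> {0..T}. \<gamma> t \<in> Sigma_set M f}"
    unfolding closed_crossing_orbit_def by blast+
  define V where "V = (\<lambda>t. w \<bullet> \<gamma> t)"
  have V_deriv: "DERIV V t :> w \<bullet> v" if "(\<gamma> has_vector_derivative v) (at t)" for v t
    using has_derivative_inner_right[OF that[unfolded has_vector_derivative_def], of w]
    by (simp add: V_def has_real_derivative_iff_has_vector_derivative
        has_vector_derivative_def o_def)
  have V_increasing: "\<exists>y. DERIV V t :> y \<and> y > 0" if "\<gamma> t \<notin> Sigma_set M f" for t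
  proof -
    have "w \<bullet> X (\<gamma> t) > 0" "w \<bullet> Y (\<gamma> t) > 0"
      using pos assms(2) by auto
    moreover have "\<gamma> t \<in> Mplus M f \<or> \<gamma> t \<in> Mminus M f"
      using that inM[of t] by (auto simp: Sigma_set_def Mplus_def Mminus_def)
    ultimately show ?thesis
      using V_deriv dX dY by blast
  qed
  have "continuous_on {0..T} \<gamma>"
    using cont by (rule continuous_on_subset) simp
  then have "continuous_on {0..T} V"
    unfolding V_def by (rule continuous_on_inner[OF continuous_on_const])
  with V_increasing have "V 0 < V T"
    by (intro DERIV_pos_imp_increasing_open_finite[OF fin \<open>T > 0\<close>]) auto
  then show False
    using per[rule_format, of 0] by (simp add: V_def)
qed

theorem theorem3p2:
  fixes M :: "(real^3) set" and f :: "real^3 \<Rightarrow> real"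
    and X0 Y0 :: "real^3 \<Rightarrow> real^3" and p :: "real^3"
  assumes "open M"
    and "smooth_on M f"
    and "\<forall>x\<in>M. f x = 0 \<longrightarrow> grad f x \<noteq> 0"
    and "smooth_on M X0" and "smooth_on M Y0"
    and "is_cusp M f X0 p"
    and "is_invisible_fold_minus M f Y0 p"
    and "transversal_at f X0 Y0 p"
    and "lie Y0 (lie X0 f) p \<noteq> 0"
  shows "\<exists>K n e U. compact K \<and> K \<subseteq> M \<and> e > 0 \<and> open U \<and> p \<in> U \<and>
           (\<forall>X Y. smooth_on M X \<and> smooth_on M Y \<and> Ck_close K n e X X0 \<and> Ck_close K n e Y Y0
              \<longrightarrow> \<not> (\<exists>\<gamma> T. crossing_limit_cycle M f X Y \<gamma> T \<and> range \<gamma> \<subseteq> U))"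
proof -
  have "p \<in> M" and "lie X0 (lie X0 f) p = 0" and "lie X0 (lie X0 (lie X0 f)) p \<noteq> 0"
    using assms(6) by (auto simp: is_cusp_def Sigma_set_def)
  have "lie Y0 (lie Y0 f) p \<noteq> 0"
    using assms(7) by (auto simp: is_invisible_fold_minus_def)
  have "X0 p \<noteq> 0" "Y0 p \<noteq> 0"
    by (rule lie_nonzero_imp_nonzero, fact)+
  moreover have "Y0 p \<noteq> c *\<^sub>R X0 p" for c
    by (rule ne_scaleR_if_lie_zero_ne_zero) fact+
  ultimately obtain w where "w \<bullet> X0 p > 0" "w \<bullet> Y0 p > 0"
    using exists_inner_pos_pair by blast
  with assms(1,4,5) \<open>p \<in> M\<close> obtain r e where "r > 0" "e > 0" "cball p r \<subseteq> M"
    and pos: "\<And>x z z'. x \<in> cball p r \<Longrightarrow> dist z (X0 x) < e \<Longrightarrow> dist z' (Y0 x) < e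
      \<Longrightarrow> w \<bullet> z > 0 \<and> w \<bullet> z' > 0"
    by (metis inner_pos_persists smooth_on_imp_isCont)
  have no_cycle: "\<not> (\<exists>\<gamma> T. crossing_limit_cycle M f X Y \<gamma> T \<and> range \<gamma> \<subseteq> ball p r)"
    if closeX: "Ck_close (cball p r) 0 e X X0" and closeY: "Ck_close (cball p r) 0 e Y Y0" for X Y
  proof -
    have "w \<bullet> X x > 0 \<and> w \<bullet> Y x > 0" if "x \<in> ball p r" for x
      using that pos[OF _ Ck_close_imp_dist[OF closeX] Ck_close_imp_dist[OF closeY]] by auto
    then have "\<not> closed_crossing_orbit M f X Y \<gamma> T" if "range \<gamma> \<subseteq> ball p r" for \<gamma> T
      using that by (rule no_closed_crossing_orbit_if_inner_pos)
    then show ?thesis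
      unfolding crossing_limit_cycle_def by blast
  qed
  show ?thesis
    by (rule exI[of _ "cball p r"], rule exI[of _ 0], rule exI[of _ e], rule exI[of _ "ball p r"])
      (use no_cycle \<open>r > 0\<close> \<open>e > 0\<close> \<open>cball p r \<subseteq> M\<close> in auto)
qed

end
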